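(* Let $H\in\mathbb{R}^{n\times n}$ and $M\in\mathbb{R}^{m\times m}$ be symmetric positive semidefinite and $A\in\mathbb{R}^{m\times n}$. Let $l$ be an index and $\mathcal{B},\mathcal{N}$ index sets such that $\mathcal{B}$, $\{l\}$, $\mathcal{N}$ are pairwise disjoint with union $\{1,\dots,n\}$. Consider vectors $(\Delta x,\Delta y,\Delta z)\in\mathbb{R}^n\times\mathbb{R}^m\times\mathbb{R}^n$ satisfying \[ H\Delta x-A^T\Delta y-\Delta z=0,\quad A\Delta x+M\Delta y=0,\quad \Delta x_{\mathcal{N}}=0,\quad \Delta z_{\mathcal{B}}=0. \tag{$*$} \] Assume $K_l$ is nonsingular and let $\Delta z_l$ be a given nonnegative scalar. 1. If $\Delta z_l=0$, then the only solution of $( * )$ with this value of $\Delta z_l$ is zero, i.e., $\Delta x_l=0$, $\Delta x_{\mathcal{B}}=0$, $\Delta y=0$, $\Delta z_{\mathcal{N}}=0$. 2. If $\Delta z_l>0$, then the quantities $\Delta x_l,\Delta x_{\mathcal{B}},\Delta y,\Delta z_{\mathcal{N}}$ of a solution of $( * )$ with this value of $\Delta z_l$ are unique and satisfy \[ K_l\begin{pmatrix}\Delta x_l\\ \Delta x_{\mathcal{B}}\\ -\Delta y\end{pmatrix}=\begin{pmatrix}1\\0\\0\end{pmatrix}\Delta z_l,\qquad \Delta z_{\mathcal{N}}=h_{\mathcal{N}l}\Delta x_l+H_{\mathcal{B}\mathcal{N}}^T\Delta x_{\mathcal{B}}-A_{\mathcal{N}}^T\Delta y. \] Moreover, either (i)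 $K_{\mathcal{B}}$ is nonsingular and $\Delta x_l>0$, or (ii) $K_{\mathcal{B}}$ is singular and $\Delta x_l=0$, in which case $\Delta x_{\mathcal{B}}=0$ and the zero eigenvalue of $K_{\mathcal{B}}$ has multiplicity one with corresponding eigenvector $(0,\Delta y)$.
   Context: For index sets $S,T$: $w_S$ is the subvector of $w$ indexed by $S$; $H_{ST}$ is the submatrix of $H$ with rows in $S$ and columns in $T$; $A_S$ is the matrix of columns of $A$ indexed by $S$; $a_l$ is the $l$th column of $A$; $h_{ll}$ is the $l$th diagonal entry of $H$; $h_{Sl}$ is the column vector of entries $h_{il}$, $i\in S$. Define \[ K_{\mathcal{B}}=\begin{pmatrix}H_{\mathcal{B}\mathcal{B}}&A_{\mathcal{B}}^T\\ A_{\mathcal{B}}&-M\end{pmatrix},\qquad K_l=\begin{pmatrix}h_{ll}&h_{\mathcal{B}l}^T&a_l^T\\ h_{\mathcal{B}l}&H_{\mathcal{B}\mathcal{B}}&A_{\mathcal{B}}^T\\ a_l&A_{\mathcal{B}}&-M\end{pmatrix}. \] *)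

theory Defs
  imports "Jordan_Normal_Form.DL_Submatrix" "Jordan_Normal_Form.Char_Poly"
begin

(* Indices are 0-based: {1..n} of the paper is {0..<n} here. *)

definition sym_psd :: "nat \<Rightarrow> real mat \<Rightarrow> bool" where
  "sym_psd n H \<longleftrightarrow> H \<in> carrier_mat n n \<and> transpose_mat H = H \<and>
     (\<forall>x \<in> carrier_vec n. x \<bullet> (H *\<^sub>v x) \<ge> 0)"

definition subvec :: "'a vec \<Rightarrow> nat set \<Rightarrow> 'a vec" where
  "subvec v I = vec (card {i. i < dim_vec v \<and> i \<in> I}) (\<lambda>i. v $ pick I i)"

definition KB :: "real mat \<Rightarrow> real mat \<Rightarrow> real mat \<Rightarrow> nat set \<Rightarrow> real mat" where
  "KB H A M B = four_block_mat (submatrix H B B) (transpose_mat (submatrix A UNIV B))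
                               (submatrix A UNIV B) (- M)"

definition Kl_col :: "real mat \<Rightarrow> real mat \<Rightarrow> nat set \<Rightarrow> nat \<Rightarrow> real vec" where
  "Kl_col H A B l = subvec (col H l) B @\<^sub>v col A l"

(* K_l = [h_ll, h_Bl^T, a_l^T; h_Bl, H_BB, A_B^T; a_l, A_B, -M] *)
definition Kl :: "real mat \<Rightarrow> real mat \<Rightarrow> real mat \<Rightarrow> nat set \<Rightarrow> nat \<Rightarrow> real mat" where
  "Kl H A M B l = (let c = Kl_col H A B l in
     four_block_mat (mat 1 1 (\<lambda>_. H $$ (l, l))) (mat 1 (dim_vec c) (\<lambda>(i, j). c $ j))
                    (mat (dim_vec c) 1 (\<lambda>(i, j). c $ i)) (KB H A M B))"

definition sys :: "nat \<Rightarrow> nat \<Rightarrow> real mat \<Rightarrow> real mat \<Rightarrow> real mat \<Rightarrow> nat set \<Rightarrow> nat set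
     \<Rightarrow> real vec \<Rightarrow> real vec \<Rightarrow> real vec \<Rightarrow> bool" where
  "sys n m H A M B N dx dy dz \<longleftrightarrow>
     dx \<in> carrier_vec n \<and> dy \<in> carrier_vec m \<and> dz \<in> carrier_vec n \<and>
     H *\<^sub>v dx - transpose_mat A *\<^sub>v dy - dz = 0\<^sub>v n \<and>
     A *\<^sub>v dx + M *\<^sub>v dy = 0\<^sub>v m \<and>
     (\<forall>i \<in> N. dx $ i = 0) \<and> (\<forall>i \<in> B. dz $ i = 0)"

end

(*
  Since dx vanishes on N and dz on B, eliminating dz from ( * ) leaves exactly
  K_l (dx_l, dx_B, -dy) = (dz_l, 0, 0); nonsingularity of K_l makes the solution a linear
  function of dz_l, which gives part 1 and the uniqueness in part 2.  Pairing the first equation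
  with dx yields dz_l dx_l = dx^T H dx + dy^T M dy >= 0, so dx_l >= 0.  For w in the kernel of
  K_B, K_l (0, w) is a multiple of (1, 0, 0), hence (0, w) is a multiple of the solution vector:
  if dx_l > 0 this forces w = 0.  If dx_l = 0, semidefiniteness gives H dx = 0 and M dy = 0,
  so dx_B = 0 and the kernel of K_B is spanned by (0, dy); as K_B is symmetric, the zero
  eigenvalue is then a simple root of the characteristic polynomial.
*)

theory Submission
  imports Defs
begin

section \<open>Block matrices and index sets\<close>

lemma zero_smult_vec[simp]: "(0 :: 'a :: semiring_0) \<cdot>\<^sub>v v = 0\<^sub>v (dim_vec v)"
  by (intro eq_vecI) auto

lemma mult_mat_vec_zero[simp]:
  "(A :: 'a :: semiring_0 mat) \<in> carrier_mat nr nc \<Longrightarrow> A *\<^sub>v 0\<^sub>v nc = 0\<^sub>v nr"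
  by (intro eq_vecI) auto

lemma append_zero_vec: "0\<^sub>v a @\<^sub>v 0\<^sub>v b = 0\<^sub>v (a + b)"
  by (intro eq_vecI) auto

lemma mult_mat_vec_cancel:
  fixes K :: "'a :: field mat"
  assumes K: "K \<in> carrier_mat n n" and det: "det K \<noteq> 0"
    and v: "v \<in> carrier_vec n" and v': "v' \<in> carrier_vec n" and eq: "K *\<^sub>v v = K *\<^sub>v v'"
  shows "v = v'"
proof -
  have "K *\<^sub>v (v - v') = 0\<^sub>v n" using K v v' eq by (simp add: mult_minus_distrib_mat_vec)
  moreover have "v - v' \<in> carrier_vec n" using v v' by simp
  ultimately have diff: "v - v' = 0\<^sub>v n" using det_0_iff_vec_prod_zero_field[OF K] det by blast
  show ?thesis
  proof (rule eq_vecI)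
    fix i assume "i < dim_vec v'"
    then show "v $ i = v' $ i" using arg_cong[OF diff, of "\<lambda>x. x $ i"] v v' by simp
  qed (use v v' in simp)
qed

lemma bordered_mat_mult_vec:
  fixes c :: "'a :: comm_ring_1 vec"
  assumes c: "c \<in> carrier_vec k" and K: "K \<in> carrier_mat k k" and v: "v \<in> carrier_vec k"
  shows "four_block_mat (mat 1 1 (\<lambda>_. a)) (mat 1 (dim_vec c) (\<lambda>(i, j). c $ j))
           (mat (dim_vec c) 1 (\<lambda>(i, j). c $ i)) K *\<^sub>v (vec_of_list [t] @\<^sub>v v)
         = vec_of_list [a * t + c \<bullet> v] @\<^sub>v (t \<cdot>\<^sub>v c + K *\<^sub>v v)"
proof -
  have t: "vec_of_list [t] \<in> carrier_vec 1" by (intro carrier_vecI) simp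
  have head: "mat 1 1 (\<lambda>_. a) *\<^sub>v vec_of_list [t] + mat 1 k (\<lambda>(i, j). c $ j) *\<^sub>v v
      = vec_of_list [a * t + c \<bullet> v]"
    using c v by (intro eq_vecI) (auto simp: scalar_prod_def)
  have tail: "mat k 1 (\<lambda>(i, j). c $ i) *\<^sub>v vec_of_list [t] = t \<cdot>\<^sub>v c"
    using c by (intro eq_vecI) (auto simp: scalar_prod_def mult.commute)
  have "four_block_mat (mat 1 1 (\<lambda>_. a)) (mat 1 k (\<lambda>(i, j). c $ j))
           (mat k 1 (\<lambda>(i, j). c $ i)) K *\<^sub>v (vec_of_list [t] @\<^sub>v v)
      = (mat 1 1 (\<lambda>_. a) *\<^sub>v vec_of_list [t] + mat 1 k (\<lambda>(i, j). c $ j) *\<^sub>v v)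
        @\<^sub>v (mat k 1 (\<lambda>(i, j). c $ i) *\<^sub>v vec_of_list [t] + K *\<^sub>v v)"
    by (rule four_block_mat_mult_vec[OF _ _ _ K t v]) auto
  then show ?thesis unfolding carrier_vecD[OF c] head tail .
qed

lemma pick_in_subset:
  assumes "S \<subseteq> {0..<n}" and "i < card S"
  shows "pick S i \<in> S" and "pick S i < n"
  using assms pick_in_set[of i S] by auto

lemma subvec_eq_vec:
  assumes "S \<subseteq> {0..<n}" and "x \<in> carrier_vec n"
  shows "subvec x S = vec (card S) (\<lambda>i. x $ pick S i)"
proof -
  have "{i. i < n \<and> i \<in> S} = S" using assms(1) by auto
  then show ?thesis using assms(2) by (simp add: subvec_def)
qed

lemma subvec_zero_vec:
  assumes "S \<subseteq> {0..<n}"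
  shows "subvec (0\<^sub>v n) S = 0\<^sub>v (card S)"
  using pick_in_subset(2)[OF assms] by (intro eq_vecI) (auto simp: subvec_eq_vec[OF assms])

lemma submatrix_carrier_mat:
  assumes "G \<in> carrier_mat nr nc" and "I \<subseteq> {0..<nr}" and "J \<subseteq> {0..<nc}"
  shows "submatrix G I J \<in> carrier_mat (card I) (card J)"
proof -
  have "{i. i < nr \<and> i \<in> I} = I" "{j. j < nc \<and> j \<in> J} = J" using assms(2,3) by auto
  then show ?thesis using assms(1) by (intro carrier_matI) (simp_all add: dim_submatrix)
qed

lemma submatrix_index_pick:
  assumes "G \<in> carrier_mat nr nc" and "I \<subseteq> {0..<nr}" and "J \<subseteq> {0..<nc}"
    and "i < card I" and "j < card J"
  shows "submatrix G I J $$ (i, j) = G $$ (pick I i, pick J j)"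
proof -
  have "{i. i < nr \<and> i \<in> I} = I" "{j. j < nc \<and> j \<in> J} = J" using assms(2,3) by auto
  then show ?thesis using assms by (simp add: submatrix_index)
qed

lemma submatrix_UNIV_carrier_mat:
  assumes "G \<in> carrier_mat nr nc" and "J \<subseteq> {0..<nc}"
  shows "submatrix G UNIV J \<in> carrier_mat nr (card J)"
proof -
  have "{j. j < nc \<and> j \<in> J} = J" using assms(2) by auto
  then show ?thesis using assms(1) by (intro carrier_matI) (simp_all add: dim_submatrix)
qed

lemma submatrix_UNIV_index:
  assumes "G \<in> carrier_mat nr nc" and "J \<subseteq> {0..<nc}" and "k < nr" and "j < card J"
  shows "submatrix G UNIV J $$ (k, j) = G $$ (k, pick J j)"
proof -
  have "{j. j < nc \<and> j \<in> J} = J" using assms(2) by auto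
  then show ?thesis using assms by (simp add: submatrix_index pick_UNIV)
qed

section \<open>Positive semidefinite matrices\<close>

lemma linear_coeff_zero_if_quadratic_nonneg:
  fixes a c :: real
  assumes nonneg: "\<And>s. 0 \<le> 2 * s * a + s^2 * c" and c: "c \<ge> 0"
  shows "a = 0"
proof -
  define s where "s = - a / (c + 1)"
  have s: "s * (c + 1) = - a" using c by (simp add: s_def)
  have "0 \<le> (c + 1)^2 * (2 * s * a + s^2 * c)" using nonneg[of s] by simp
  also have "\<dots> = 2 * a * (c + 1) * (s * (c + 1)) + c * (s * (c + 1))^2"
    by (simp add: power2_eq_square algebra_simps)
  also have "\<dots> = - (a^2 * (c + 2))" unfolding s by (simp add: power2_eq_square algebra_simps)
  finally have "a^2 * (c + 2) \<le> 0" by linarith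
  then show ?thesis using c by (smt (verit) mult_pos_pos zero_less_power2)
qed

lemma sym_psd_mult_vec_eq_0:
  assumes H: "sym_psd n H" and x: "x \<in> carrier_vec n" and x_H_x: "x \<bullet> (H *\<^sub>v x) = 0"
  shows "H *\<^sub>v x = 0\<^sub>v n"
proof -
  have H_carrier: "H \<in> carrier_mat n n" and H_sym: "transpose_mat H = H"
    and psd: "\<And>z. z \<in> carrier_vec n \<Longrightarrow> z \<bullet> (H *\<^sub>v z) \<ge> 0"
    using H unfolding sym_psd_def by auto
  define y where "y = H *\<^sub>v x"
  have y: "y \<in> carrier_vec n" using H_carrier x by (simp add: y_def)
  have x_H_y: "x \<bullet> (H *\<^sub>v y) = y \<bullet> y"
    using transpose_vec_mult_scalar[OF H_carrier y x] H_sym by (simp add: y_def)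
  have x_y: "x \<bullet> y = 0" using x_H_x by (simp add: y_def)
  have Hy: "H *\<^sub>v y \<in> carrier_vec n" using H_carrier y by simp
  have "0 \<le> 2 * s * (y \<bullet> y) + s^2 * (y \<bullet> (H *\<^sub>v y))" for s
  proof -
    have H_xy: "H *\<^sub>v (x + s \<cdot>\<^sub>v y) = y + s \<cdot>\<^sub>v (H *\<^sub>v y)"
      using H_carrier x y by (simp add: mult_add_distrib_mat_vec mult_mat_vec y_def)
    have "0 \<le> (x + s \<cdot>\<^sub>v y) \<bullet> (H *\<^sub>v (x + s \<cdot>\<^sub>v y))" using x y by (intro psd) simp
    also have "\<dots> = x \<bullet> y + s * (x \<bullet> (H *\<^sub>v y)) + s * (y \<bullet> y) + s * s * (y \<bullet> (H *\<^sub>v y))"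
      unfolding H_xy using x y Hy
      by (simp add: add_scalar_prod_distrib[of _ n] scalar_prod_add_distrib[of _ n] algebra_simps)
    also have "\<dots> = 2 * s * (y \<bullet> y) + s^2 * (y \<bullet> (H *\<^sub>v y))"
      unfolding x_y x_H_y by (simp add: power2_eq_square)
    finally show ?thesis .
  qed
  then have "y \<bullet> y = 0"
    using linear_coeff_zero_if_quadratic_nonneg psd[OF y] by blast
  then show ?thesis using conjugate_square_eq_0_vec[OF y] by (simp add: y_def)
qed

section \<open>Simple zero eigenvalues of symmetric matrices\<close>

lemma mult_mat_vec_delete_index:
  fixes K :: "'a :: comm_ring_1 mat"
  assumes K: "K \<in> carrier_mat (Suc n) (Suc n)" and j: "j < Suc n"
    and v: "v \<in> carrier_vec n" and r: "r < n"
  shows "(K *\<^sub>v vec (Suc n) (\<lambda>i. if i = j then 0 else v $ delete_index j i)) $ insert_index j r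
       = (mat_delete K j j *\<^sub>v v) $ r"
proof -
  let ?u = "vec (Suc n) (\<lambda>i. if i = j then 0 else v $ delete_index j i)"
  have "insert_index j r < Suc n" using r by (simp add: insert_index_def)
  then have "(K *\<^sub>v ?u) $ insert_index j r = (\<Sum>c\<in>{0..<Suc n}. K $$ (insert_index j r, c) * ?u $ c)"
    using K by (simp add: scalar_prod_def)
  also have "\<dots> = (\<Sum>c\<in>{0..<Suc n} - {j}. K $$ (insert_index j r, c) * ?u $ c)"
    using j by (intro sum.mono_neutral_right) auto
  also have "\<dots> = (\<Sum>c\<in>{0..<n}. K $$ (insert_index j r, insert_index j c) * v $ c)"
    unfolding insert_index_image[OF j, symmetric]
    by (subst sum.reindex[OF insert_index_inj_on]) (intro sum.cong refl, auto simp: insert_index_def delete_index_def)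
  also have "\<dots> = (mat_delete K j j *\<^sub>v v) $ r"
    using K j v r by (simp add: scalar_prod_def mat_delete_index[OF K j j])
  finally show ?thesis .
qed

lemma simple_zero_eigenvalue_zero_column:
  fixes K :: "'a :: field mat"
  assumes K: "K \<in> carrier_mat (Suc n) (Suc n)" and j: "j < Suc n"
    and col_j: "\<And>i. i < Suc n \<Longrightarrow> K $$ (i, j) = 0"
    and ker: "\<And>v. v \<in> carrier_vec (Suc n) \<Longrightarrow> K *\<^sub>v v = 0\<^sub>v (Suc n) \<Longrightarrow> v $ j = 0 \<Longrightarrow> v = 0\<^sub>v (Suc n)"
    and y: "y \<in> carrier_vec (Suc n)" "y $ j \<noteq> 0"
    and y_left_null: "\<And>v. v \<in> carrier_vec (Suc n) \<Longrightarrow> y \<bullet> (K *\<^sub>v v) = 0"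
  shows "order 0 (char_poly K) = 1"
proof -
  let ?K' = "mat_delete K j j"
  have K': "?K' \<in> carrier_mat n n" using mat_delete_carrier[OF K] by simp
  \<comment> \<open>A null vector of the minor lifts to \<open>u\<close> with \<open>K u\<close> in the span of \<open>e\<^sub>j\<close>; \<open>y\<close> forces \<open>K u = 0\<close>.\<close>
  have "\<not> eigenvalue ?K' 0"
  proof
    assume "eigenvalue ?K' 0"
    then obtain v where v: "v \<in> carrier_vec n" "v \<noteq> 0\<^sub>v n" "?K' *\<^sub>v v = 0 \<cdot>\<^sub>v v"
      using K' unfolding eigenvalue_def eigenvector_def by auto
    then have K'v: "?K' *\<^sub>v v = 0\<^sub>v n" by simp
    define u where "u = vec (Suc n) (\<lambda>i. if i = j then 0 else v $ delete_index j i)"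
    have u: "u \<in> carrier_vec (Suc n)" by (simp add: u_def)
    define s where "s = (K *\<^sub>v u) $ j"
    have Ku: "K *\<^sub>v u = s \<cdot>\<^sub>v unit_vec (Suc n) j"
    proof (rule eq_vecI)
      fix i assume "i < dim_vec (s \<cdot>\<^sub>v unit_vec (Suc n) j)"
      then have i: "i < Suc n" by simp
      show "(K *\<^sub>v u) $ i = (s \<cdot>\<^sub>v unit_vec (Suc n) j) $ i"
      proof (cases "i = j")
        case False
        then have "i = insert_index j (delete_index j i)" "delete_index j i < n"
          using i j by (auto simp: insert_delete_index delete_index_def)
        then show ?thesis
          using mult_mat_vec_delete_index[OF K j v(1) \<open>delete_index j i < n\<close>] K'v i False K
          by (simp add: u_def unit_vec_def)
      qed (use j in \<open>simp add: s_def\<close>)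
    qed (use K in simp)
    have "s * y $ j = 0"
      using y_left_null[OF u] y(1) j unfolding Ku by simp
    then have "K *\<^sub>v u = 0\<^sub>v (Suc n)" using Ku y(2) by simp
    then have u0: "u = 0\<^sub>v (Suc n)" using ker[OF u] j by (simp add: u_def)
    have "v $ r = 0" if "r < n" for r
      using arg_cong[of _ _ "\<lambda>x. x $ insert_index j r", OF u0] that
      by (simp add: u_def insert_index_def delete_index_def split: if_splits)
    then show False using v(1,2) by (metis eq_vecI carrier_vecD index_zero_vec)
  qed
  then have "order 0 (char_poly ?K') = 0"
    using eigenvalue_root_char_poly[OF K'] by (simp add: order_0I)
  moreover have "char_poly ?K' \<noteq> 0" using degree_monic_char_poly[OF K'] by auto
  moreover have "order 0 (monom 1 1 :: 'a poly) = 1"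
    using order_power_n_n[of "0 :: 'a" 1] by (simp add: monom_altdef)
  moreover have "char_poly K = monom 1 1 * char_poly ?K'"
    by (rule char_poly_0_column[OF col_j K j])
  ultimately show ?thesis by (simp add: order_mult monom_eq_0_iff)
qed

lemma obtain_invertible_mat_unit_vec_image:
  fixes w :: "'a :: field vec"
  assumes w: "w \<in> carrier_vec n" and j: "j < n" and wj: "w $ j \<noteq> 0"
  obtains P Q where "P \<in> carrier_mat n n" "Q \<in> carrier_mat n n" "P * Q = 1\<^sub>m n" "Q * P = 1\<^sub>m n"
    "P *\<^sub>v unit_vec n j = w"
proof -
  define P where "P = mat n n (\<lambda>(r, c). if c = j then w $ r else if r = c then 1 else 0)"
  have P: "P \<in> carrier_mat n n" by (simp add: P_def)
  have P_mult: "(P *\<^sub>v v) $ r = w $ r * v $ j + (if r = j then 0 else v $ r)"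
    if v: "v \<in> carrier_vec n" and r: "r < n" for v r
  proof -
    have "(P *\<^sub>v v) $ r = (\<Sum>c\<in>{0..<n}. (if c = j then w $ r else if r = c then 1 else 0) * v $ c)"
      using v r by (simp add: P_def scalar_prod_def)
    also have "\<dots> = w $ r * v $ j + (\<Sum>c\<in>{0..<n} - {j}. (if r = c then 1 else 0) * v $ c)"
      using j by (subst sum.remove[of _ j]) (auto intro!: sum.cong)
    also have "\<dots> = w $ r * v $ j + (if r = j then 0 else v $ r)"
      using r by (simp add: if_distrib[of "\<lambda>x. x * _"] cong: if_cong)
    finally show ?thesis .
  qed
  have "P *\<^sub>v unit_vec n j = w"
    using w j by (intro eq_vecI) (auto simp: P_def)
  moreover have "v = 0\<^sub>v n" if v: "v \<in> carrier_vec n" and Pv: "P *\<^sub>v v = 0\<^sub>v n" for v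
  proof -
    have Pv_r: "w $ r * v $ j + (if r = j then 0 else v $ r) = 0" if "r < n" for r
      using arg_cong[OF Pv, of "\<lambda>x. x $ r"] P_mult[OF v that] that by simp
    have vj: "v $ j = 0" using Pv_r[OF j] wj by simp
    have "v $ r = 0" if "r < n" for r
      using Pv_r[OF that] vj by (cases "r = j") auto
    then show ?thesis using v by (intro eq_vecI) auto
  qed
  then have "det P \<noteq> 0" using det_0_iff_vec_prod_zero_field[OF P] by blast
  from det_non_zero_imp_unit[OF P this, of "()"]
  obtain Q where "Q \<in> carrier_mat n n" "Q * P = 1\<^sub>m n" "P * Q = 1\<^sub>m n"
    unfolding Units_def by (auto simp: ring_mat_simps)
  ultimately show ?thesis using that[OF P] by blast
qed

lemma simple_zero_eigenvalue_symmetric: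
  fixes K :: "real mat"
  assumes K: "K \<in> carrier_mat n n" and K_sym: "transpose_mat K = K"
    and w: "w \<in> carrier_vec n" "w \<noteq> 0\<^sub>v n" "K *\<^sub>v w = 0\<^sub>v n"
    and ker: "\<And>v. v \<in> carrier_vec n \<Longrightarrow> K *\<^sub>v v = 0\<^sub>v n \<Longrightarrow> \<exists>c. v = c \<cdot>\<^sub>v w"
  shows "order 0 (char_poly K) = 1"
proof -
  obtain j where j: "j < n" and wj: "w $ j \<noteq> 0"
    using w(1,2) by (metis eq_vecI carrier_vecD index_zero_vec)
  \<comment> \<open>After a change of basis sending \<open>e\<^sub>j\<close> to \<open>w\<close>, column \<open>j\<close> vanishes; by symmetry \<open>P\<^sup>T w\<close> is a
    left null vector whose \<open>j\<close>-th entry is \<open>w \<bullet> w \<noteq> 0\<close>.\<close>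
  obtain P Q where P: "P \<in> carrier_mat n n" and Q: "Q \<in> carrier_mat n n"
    and PQ: "P * Q = 1\<^sub>m n" and QP: "Q * P = 1\<^sub>m n" and Pj: "P *\<^sub>v unit_vec n j = w"
    using obtain_invertible_mat_unit_vec_image[OF w(1) j wj] .
  define Kt where "Kt = Q * K * P"
  have Kt: "Kt \<in> carrier_mat n n" using K P Q by (simp add: Kt_def)
  have P_Kt: "P * Kt = K * P"
  proof -
    have "P * Kt = (P * Q) * K * P"
      using K P Q by (simp add: Kt_def assoc_mult_mat[of _ n n _ n _ n])
    then show ?thesis using K PQ by simp
  qed
  have "similar_mat K Kt"
  proof (rule similar_matI[OF _ PQ QP])
    have "P * Kt * Q = K * (P * Q)"
      using K P Q Kt by (simp add: P_Kt assoc_mult_mat[of _ n n _ n _ n])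
    then show "K = P * Kt * Q" using K PQ by simp
  qed (use K Kt P Q in auto)
  then have "char_poly K = char_poly Kt" by (rule char_poly_similar)
  have K_P: "K *\<^sub>v (P *\<^sub>v v) = P *\<^sub>v (Kt *\<^sub>v v)" if "v \<in> carrier_vec n" for v
    using K P Kt that by (simp flip: assoc_mult_mat_vec add: P_Kt)
  have "Kt *\<^sub>v unit_vec n j = Q *\<^sub>v (K *\<^sub>v (P *\<^sub>v unit_vec n j))"
    unfolding Kt_def using K P Q by (auto simp: assoc_mult_mat_vec[of _ n n _ n])
  then have Kt_j: "Kt *\<^sub>v unit_vec n j = 0\<^sub>v n"
    using Q w by (simp add: Pj)
  have col_j: "Kt $$ (i, j) = 0" if "i < n" for i
    using arg_cong[OF Kt_j, of "\<lambda>x. x $ i"] that Kt j by simp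
  have Q_P: "Q *\<^sub>v (P *\<^sub>v v) = v" if "v \<in> carrier_vec n" for v
    using P Q that by (simp flip: assoc_mult_mat_vec add: QP)
  have ker_Kt: "v = 0\<^sub>v n"
    if v: "v \<in> carrier_vec n" and Ktv: "Kt *\<^sub>v v = 0\<^sub>v n" and vj: "v $ j = 0" for v
  proof -
    have "K *\<^sub>v (P *\<^sub>v v) = 0\<^sub>v n" using K_P[OF v] Ktv P by simp
    then obtain c where c: "P *\<^sub>v v = c \<cdot>\<^sub>v w" using ker[of "P *\<^sub>v v"] P v by auto
    have "v = Q *\<^sub>v (P *\<^sub>v v)" using Q_P[OF v] ..
    also have "\<dots> = c \<cdot>\<^sub>v unit_vec n j"
      using Q_P[of "unit_vec n j"] P Q by (simp flip: Pj add: c mult_mat_vec)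
    finally show ?thesis using vj j by auto
  qed
  define y where "y = transpose_mat P *\<^sub>v w"
  have y: "y \<in> carrier_vec n" using P w by (simp add: y_def)
  have "y $ j = w \<bullet> w"
    using transpose_vec_mult_scalar[OF P unit_vec_carrier w(1), of j] y j Pj
    by (simp add: y_def)
  then have yj: "y $ j \<noteq> 0" using conjugate_square_eq_0_vec[OF w(1)] w(2) by simp
  have y_left_null: "y \<bullet> (Kt *\<^sub>v v) = 0" if v: "v \<in> carrier_vec n" for v
  proof -
    have "y \<bullet> (Kt *\<^sub>v v) = w \<bullet> (K *\<^sub>v (P *\<^sub>v v))"
      using transpose_vec_mult_scalar[OF P _ w(1), of "Kt *\<^sub>v v"] K_P[OF v] Kt v
      by (simp add: y_def)
    also have "\<dots> = (K *\<^sub>v w) \<bullet> (P *\<^sub>v v)"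
      using transpose_vec_mult_scalar[OF K _ w(1), of "P *\<^sub>v v"] K_sym P v by simp
    finally show ?thesis using w(3) P v by simp
  qed
  obtain n' where n: "n = Suc n'" using j by (cases n) auto
  have "order 0 (char_poly Kt) = 1"
    by (rule simple_zero_eigenvalue_zero_column[OF Kt[unfolded n] j[unfolded n] col_j[unfolded n]
          ker_Kt[unfolded n] y[unfolded n] yj y_left_null[unfolded n]])
  with \<open>char_poly K = char_poly Kt\<close> show ?thesis by simp
qed

section \<open>The saddle-point system\<close>

text \<open>\<open>card {a\<in>B. a < j}\<close> is the position of \<open>j\<close> in \<open>B\<close>, so \<open>embed_vec\<close> inverts \<open>subvec _ B\<close>.\<close>

definition embed_vec :: "nat \<Rightarrow> nat set \<Rightarrow> nat \<Rightarrow> 'a :: zero \<Rightarrow> 'a vec \<Rightarrow> 'a vec" where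
  "embed_vec n B l t p = vec n (\<lambda>j. if j = l then t else if j \<in> B then p $ card {a\<in>B. a < j} else 0)"

locale index_split =
  fixes n :: nat and B :: "nat set" and l :: nat
  assumes B_subset: "B \<subseteq> {0..<n}" and l_less: "l < n" and l_notin_B: "l \<notin> B"
begin

lemma finite_B: "finite B"
  using B_subset finite_subset by blast

lemmas pick_B = pick_in_subset(1)[OF B_subset]
  and pick_B_less = pick_in_subset(2)[OF B_subset]

lemma card_less_B: "j \<in> B \<Longrightarrow> card {a\<in>B. a < j} < card B"
  using finite_B by (intro psubset_card_mono) auto

lemma bij_betw_pick: "bij_betw (pick B) {..<card B} B"
proof (rule bij_betwI[where g = "\<lambda>j. card {a\<in>B. a < j}"])
  show "pick B \<in> {..<card B} \<rightarrow> B" using pick_B by auto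
  show "(\<lambda>j. card {a\<in>B. a < j}) \<in> B \<rightarrow> {..<card B}" using card_less_B by auto
qed (auto simp: card_pick pick_card_in_set)

lemmas subvec_eq = subvec_eq_vec[OF B_subset]

lemma subvec_carrier: "x \<in> carrier_vec n \<Longrightarrow> subvec x B \<in> carrier_vec (card B)"
  by (simp add: subvec_eq)

lemma embed_vec_carrier[simp]: "embed_vec n B l t p \<in> carrier_vec n"
  by (simp add: embed_vec_def)

lemma scalar_prod_embed_vec:
  assumes y: "y \<in> carrier_vec n"
  shows "y \<bullet> embed_vec n B l t p = y $ l * t + (\<Sum>i<card B. y $ pick B i * p $ i)"
proof -
  have "y \<bullet> embed_vec n B l t p
      = (\<Sum>j\<in>{0..<n}. (if j = l then y $ j * t else 0) + (if j \<in> B then y $ j * p $ card {a\<in>B. a < j} else 0))"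
    using y l_notin_B by (auto simp: scalar_prod_def embed_vec_def intro!: sum.cong)
  also have "\<dots> = y $ l * t + (\<Sum>j\<in>B. y $ j * p $ card {a\<in>B. a < j})"
    using l_less B_subset by (simp add: sum.distrib sum.If_cases Int_absorb1)
  also have "(\<Sum>j\<in>B. y $ j * p $ card {a\<in>B. a < j}) = (\<Sum>i<card B. y $ pick B i * p $ i)"
    by (subst sum.reindex_bij_betw[OF bij_betw_pick, symmetric]) (simp add: card_pick)
  finally show ?thesis .
qed

lemma mult_embed_vec_index:
  assumes "G \<in> carrier_mat k n" and "r < k"
  shows "(G *\<^sub>v embed_vec n B l t p) $ r = G $$ (r, l) * t + (\<Sum>i<card B. G $$ (r, pick B i) * p $ i)"
  using assms l_less pick_B_less by (simp add: scalar_prod_embed_vec)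

end

locale saddle_point_blocks = index_split +
  fixes m :: nat and H A M :: "real mat"
  assumes H_carrier: "H \<in> carrier_mat n n" and H_sym: "transpose_mat H = H"
    and A_carrier: "A \<in> carrier_mat m n"
    and M_carrier: "M \<in> carrier_mat m m" and M_sym: "transpose_mat M = M"
begin

lemma H_entry_sym: "i < n \<Longrightarrow> j < n \<Longrightarrow> H $$ (i, j) = H $$ (j, i)"
  using arg_cong[OF H_sym, of "\<lambda>X. X $$ (j, i)"] H_carrier by simp

lemmas HBB_carrier = submatrix_carrier_mat[OF H_carrier B_subset B_subset]
  and HBB_index = submatrix_index_pick[OF H_carrier B_subset B_subset]
  and AB_carrier = submatrix_UNIV_carrier_mat[OF A_carrier B_subset]
  and AB_index = submatrix_UNIV_index[OF A_carrier B_subset]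

lemma KB_carrier: "KB H A M B \<in> carrier_mat (card B + m) (card B + m)"
  unfolding KB_def using HBB_carrier AB_carrier M_carrier by auto

lemma KB_sym: "transpose_mat (KB H A M B) = KB H A M B"
proof -
  have "transpose_mat (submatrix H B B) = submatrix H B B"
    using HBB_carrier by (intro eq_matI) (auto simp: HBB_index H_entry_sym pick_B_less)
  then show ?thesis unfolding KB_def
    using HBB_carrier AB_carrier M_carrier M_sym by (subst transpose_four_block_mat) (auto simp: transpose_uminus)
qed

lemma KB_mult_vec:
  assumes p: "p \<in> carrier_vec (card B)" and q: "q \<in> carrier_vec m"
  shows "KB H A M B *\<^sub>v (p @\<^sub>v q) = (submatrix H B B *\<^sub>v p + transpose_mat (submatrix A UNIV B) *\<^sub>v q)
      @\<^sub>v (submatrix A UNIV B *\<^sub>v p - M *\<^sub>v q)"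
proof -
  have "- M *\<^sub>v q = - (M *\<^sub>v q)" using M_carrier q by simp
  then show ?thesis
    unfolding KB_def using HBB_carrier AB_carrier M_carrier p q
    by (subst four_block_mat_mult_vec[of _ "card B" "card B" _ m _ m]) (auto simp: minus_add_uminus_vec)
qed

lemma Kl_col_carrier: "Kl_col H A B l \<in> carrier_vec (card B + m)"
  unfolding Kl_col_def using H_carrier A_carrier l_less by (simp add: subvec_carrier)

lemma Kl_col_index_B: "i < card B \<Longrightarrow> Kl_col H A B l $ i = H $$ (pick B i, l)"
  unfolding Kl_col_def using H_carrier A_carrier l_less pick_B_less by (simp add: subvec_eq)

lemma Kl_col_index_A: "k < m \<Longrightarrow> Kl_col H A B l $ (card B + k) = A $$ (k, l)"
  unfolding Kl_col_def using H_carrier A_carrier l_less by (simp add: subvec_eq)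

lemma Kl_carrier: "Kl H A M B l \<in> carrier_mat (1 + (card B + m)) (1 + (card B + m))"
  unfolding Kl_def Let_def using Kl_col_carrier KB_carrier by auto

lemma Kl_mult_vec_bordered:
  assumes "w \<in> carrier_vec (card B + m)"
  shows "Kl H A M B l *\<^sub>v (vec_of_list [t] @\<^sub>v w)
    = vec_of_list [H $$ (l, l) * t + Kl_col H A B l \<bullet> w] @\<^sub>v (t \<cdot>\<^sub>v Kl_col H A B l + KB H A M B *\<^sub>v w)"
  unfolding Kl_def Let_def by (rule bordered_mat_mult_vec[OF Kl_col_carrier KB_carrier assms])

lemma Kl_mult_vec_head_zero:
  assumes "w \<in> carrier_vec (card B + m)"
  shows "Kl H A M B l *\<^sub>v (vec_of_list [0] @\<^sub>v w) = vec_of_list [Kl_col H A B l \<bullet> w] @\<^sub>v (KB H A M B *\<^sub>v w)"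
  using Kl_mult_vec_bordered[OF assms, of 0] Kl_col_carrier KB_carrier assms by simp

lemma Kl_col_scalar_prod:
  assumes p: "p \<in> carrier_vec (card B)" and q: "q \<in> carrier_vec m"
  shows "Kl_col H A B l \<bullet> (p @\<^sub>v q) = (\<Sum>i<card B. H $$ (pick B i, l) * p $ i) + (\<Sum>k<m. A $$ (k, l) * q $ k)"
  unfolding Kl_col_def using H_carrier A_carrier l_less p q pick_B_less
  by (subst scalar_prod_append[of _ "card B" _ m]) (auto simp: subvec_eq scalar_prod_def lessThan_atLeast0)

text \<open>\<open>K\<^sub>l\<close> is the principal submatrix of \<open>[H, A\<^sup>T; A, -M]\<close> on the rows \<open>l\<close>, \<open>B\<close> and all
  multiplier rows, with \<open>l\<close> moved first.\<close>

lemma Kl_mult_vec: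
  assumes p: "p \<in> carrier_vec (card B)" and q: "q \<in> carrier_vec m"
  shows "Kl H A M B l *\<^sub>v (vec_of_list [t] @\<^sub>v p @\<^sub>v q)
    = vec_of_list [(H *\<^sub>v embed_vec n B l t p + transpose_mat A *\<^sub>v q) $ l]
      @\<^sub>v subvec (H *\<^sub>v embed_vec n B l t p + transpose_mat A *\<^sub>v q) B
      @\<^sub>v (A *\<^sub>v embed_vec n B l t p - M *\<^sub>v q)"
    (is "_ = ?rhs")
proof -
  let ?x = "embed_vec n B l t p"
  have Hx: "(H *\<^sub>v ?x) $ r = H $$ (r, l) * t + (\<Sum>j<card B. H $$ (r, pick B j) * p $ j)" if "r < n" for r
    using mult_embed_vec_index[OF H_carrier that] .
  have Ax: "(A *\<^sub>v ?x) $ k = A $$ (k, l) * t + (\<Sum>j<card B. A $$ (k, pick B j) * p $ j)" if "k < m" for k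
    using mult_embed_vec_index[OF A_carrier that] .
  have Atq: "(transpose_mat A *\<^sub>v q) $ r = (\<Sum>k<m. A $$ (k, r) * q $ k)" if "r < n" for r
    using that A_carrier q by (simp add: scalar_prod_def lessThan_atLeast0)
  have pq: "p @\<^sub>v q \<in> carrier_vec (card B + m)" using p q by simp
  let ?lhs = "vec_of_list [H $$ (l, l) * t + ((\<Sum>i<card B. H $$ (pick B i, l) * p $ i) + (\<Sum>k<m. A $$ (k, l) * q $ k))]
    @\<^sub>v (t \<cdot>\<^sub>v Kl_col H A B l + ((submatrix H B B *\<^sub>v p + transpose_mat (submatrix A UNIV B) *\<^sub>v q)
      @\<^sub>v (submatrix A UNIV B *\<^sub>v p - M *\<^sub>v q)))"
  have "?lhs = ?rhs"
  proof (rule eq_vecI)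
    have "dim_vec ?rhs = Suc (card B + m)"
      using H_carrier A_carrier M_carrier q by (simp add: subvec_eq)
    moreover fix i assume "i < dim_vec ?rhs"
    ultimately have i: "i < Suc (card B + m)" by simp
    consider "i = 0" | i' where "i = Suc i'" "i' < card B" | k where "i = Suc (card B + k)" "k < m"
    proof (cases i)
      case (Suc i')
      with i that(2,3)[of i'] that(3)[of "i' - card B"] show thesis by (cases "i' < card B") auto
    qed (use that(1) in blast)
    then show "?lhs $ i = ?rhs $ i"
    proof cases
      case 1
      then show ?thesis
        using l_less H_carrier A_carrier q Hx[OF l_less] Atq[OF l_less]
        by (simp add: H_entry_sym[OF pick_B_less l_less])
    next
      case 2
      then show ?thesis
        using H_carrier A_carrier HBB_carrier AB_carrier Kl_col_carrier p q pick_B_less[OF 2(2)]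
          Hx[OF pick_B_less[OF 2(2)]] Atq[OF pick_B_less[OF 2(2)]]
        by (simp add: subvec_eq Kl_col_index_B HBB_index AB_index scalar_prod_def lessThan_atLeast0 mult.commute)
    next
      case 3
      then show ?thesis
        using H_carrier A_carrier M_carrier HBB_carrier AB_carrier Kl_col_carrier p q Ax[OF 3(2)]
        by (simp add: subvec_eq Kl_col_index_A AB_index scalar_prod_def lessThan_atLeast0 mult.commute)
    qed
  qed (use H_carrier A_carrier HBB_carrier AB_carrier M_carrier Kl_col_carrier p q in \<open>simp add: subvec_eq\<close>)
  then show ?thesis
    unfolding Kl_mult_vec_bordered[OF pq] KB_mult_vec[OF p q] Kl_col_scalar_prod[OF p q] .
qed

end

locale saddle_point_system = saddle_point_blocks +
  fixes N :: "nat set"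
  assumes H_psd: "sym_psd n H" and M_psd: "sym_psd m M"
    and partition: "B \<union> {l} \<union> N = {0..<n}"
    and Kl_nonsingular: "det (Kl H A M B l) \<noteq> 0"
begin

lemma N_subset: "N \<subseteq> {0..<n}"
  using partition by blast

lemma sys_zero: "sys n m H A M B N (0\<^sub>v n) (0\<^sub>v m) (0\<^sub>v n)"
  using H_carrier A_carrier M_carrier N_subset B_subset by (auto simp: sys_def)

context
  fixes dx dy dz assumes sol: "sys n m H A M B N dx dy dz"
begin

lemma sys_carrier: "dx \<in> carrier_vec n" "dy \<in> carrier_vec m" "dz \<in> carrier_vec n"
  using sol by (auto simp: sys_def)

lemma sys_dz_eq: "dz = H *\<^sub>v dx - transpose_mat A *\<^sub>v dy"
proof (rule eq_vecI)
  fix i assume "i < dim_vec (H *\<^sub>v dx - transpose_mat A *\<^sub>v dy)"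
  then have i: "i < n" using H_carrier A_carrier by simp
  have "(H *\<^sub>v dx - transpose_mat A *\<^sub>v dy - dz) $ i = 0" using sol i by (simp add: sys_def)
  then show "dz $ i = (H *\<^sub>v dx - transpose_mat A *\<^sub>v dy) $ i"
    using i H_carrier A_carrier sys_carrier by simp
qed (use sys_carrier H_carrier A_carrier in simp)

lemma sys_A_dx: "A *\<^sub>v dx = - (M *\<^sub>v dy)"
proof (rule eq_vecI)
  fix k assume "k < dim_vec (- (M *\<^sub>v dy))"
  then have k: "k < m" using M_carrier by simp
  have "(A *\<^sub>v dx + M *\<^sub>v dy) $ k = 0" using sol k by (simp add: sys_def)
  then show "(A *\<^sub>v dx) $ k = (- (M *\<^sub>v dy)) $ k" using k A_carrier M_carrier sys_carrier by simp
qed (use A_carrier M_carrier in simp)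

lemma sys_embed_vec: "embed_vec n B l (dx $ l) (subvec dx B) = dx"
proof (rule eq_vecI)
  fix j assume "j < dim_vec dx"
  then have j: "j < n" using sys_carrier by simp
  have "j \<in> B \<union> {l} \<union> N" unfolding partition using j by simp
  then have "j \<in> N" if "j \<noteq> l" "j \<notin> B" using that by blast
  then show "embed_vec n B l (dx $ l) (subvec dx B) $ j = dx $ j"
    using sol j sys_carrier card_less_B
    by (auto simp: embed_vec_def sys_def subvec_eq pick_card_in_set)
qed (use sys_carrier in simp)

lemma sys_Kl_mult_vec:
  "Kl H A M B l *\<^sub>v (vec_of_list [dx $ l] @\<^sub>v subvec dx B @\<^sub>v (- dy))
    = vec_of_list [dz $ l] @\<^sub>v 0\<^sub>v (card B) @\<^sub>v 0\<^sub>v m"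
proof -
  have "H *\<^sub>v dx + transpose_mat A *\<^sub>v (- dy) = dz"
    using sys_dz_eq sys_carrier H_carrier A_carrier by (auto intro!: eq_vecI)
  moreover have "A *\<^sub>v dx - M *\<^sub>v (- dy) = 0\<^sub>v m"
    using sys_A_dx sys_carrier A_carrier M_carrier by (auto intro!: eq_vecI)
  moreover have "subvec dz B = 0\<^sub>v (card B)"
    using sol sys_carrier pick_B by (auto simp: subvec_eq sys_def intro!: eq_vecI)
  ultimately show ?thesis
    using Kl_mult_vec[OF subvec_carrier[OF sys_carrier(1)], of "- dy" "dx $ l"] sys_carrier
    by (simp add: sys_embed_vec)
qed

lemma sys_quadratic_form: "dz $ l * dx $ l = dx \<bullet> (H *\<^sub>v dx) + dy \<bullet> (M *\<^sub>v dy)"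
proof -
  \<comment> \<open>\<open>dx\<close> vanishes on \<open>N\<close> and \<open>dz\<close> on \<open>B\<close>\<close>
  have "dz \<bullet> dx = dz $ l * dx $ l"
    using scalar_prod_embed_vec[OF sys_carrier(3), of "dx $ l" "subvec dx B"] sol pick_B
    by (simp add: sys_embed_vec sys_def)
  moreover have "dz \<bullet> dx = (H *\<^sub>v dx) \<bullet> dx - (transpose_mat A *\<^sub>v dy) \<bullet> dx"
    using sys_carrier H_carrier A_carrier by (subst sys_dz_eq) (simp add: minus_scalar_prod_distrib[of _ n])
  moreover have "(H *\<^sub>v dx) \<bullet> dx = dx \<bullet> (H *\<^sub>v dx)"
    using sys_carrier H_carrier by (simp add: comm_scalar_prod[of _ n])
  moreover have "(transpose_mat A *\<^sub>v dy) \<bullet> dx = dy \<bullet> (A *\<^sub>v dx)"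
    by (rule transpose_vec_mult_scalar[OF A_carrier sys_carrier(1,2)])
  moreover have "dy \<bullet> (A *\<^sub>v dx) = - (dy \<bullet> (M *\<^sub>v dy))"
    using sys_carrier M_carrier by (simp add: sys_A_dx)
  ultimately show ?thesis by simp
qed

lemma sys_Kl_vec_carrier:
  "vec_of_list [dx $ l] @\<^sub>v subvec dx B @\<^sub>v (- dy) \<in> carrier_vec (1 + (card B + m))"
  using subvec_carrier[OF sys_carrier(1)] sys_carrier(2) by (intro append_carrier_vec) (auto intro: carrier_vecI)

lemma sys_dz_N:
  "subvec dz N = (dx $ l) \<cdot>\<^sub>v subvec (col H l) N + transpose_mat (submatrix H B N) *\<^sub>v subvec dx B
     - transpose_mat (submatrix A UNIV N) *\<^sub>v dy"
  (is "_ = ?rhs")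
proof (rule eq_vecI)
  have HBN: "submatrix H B N \<in> carrier_mat (card B) (card N)"
    by (rule submatrix_carrier_mat[OF H_carrier B_subset N_subset])
  have AN: "submatrix A UNIV N \<in> carrier_mat m (card N)"
    by (rule submatrix_UNIV_carrier_mat[OF A_carrier N_subset])
  have dim: "dim_vec ?rhs = card N"
    using H_carrier l_less HBN AN by (simp add: subvec_eq_vec[OF N_subset])
  then show "dim_vec (subvec dz N) = dim_vec ?rhs"
    using sys_carrier by (simp add: subvec_eq_vec[OF N_subset])
  fix i assume "i < dim_vec ?rhs"
  then have i: "i < card N" using dim by simp
  define j where "j = pick N i"
  have j: "j < n" using pick_in_subset(2)[OF N_subset i] by (simp add: j_def)
  have "(H *\<^sub>v dx) $ j = H $$ (j, l) * dx $ l + (\<Sum>i'<card B. H $$ (j, pick B i') * subvec dx B $ i')"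
    using mult_embed_vec_index[OF H_carrier j, of "dx $ l" "subvec dx B"] by (simp add: sys_embed_vec)
  moreover have "(transpose_mat (submatrix H B N) *\<^sub>v subvec dx B) $ i
      = (\<Sum>i'<card B. H $$ (j, pick B i') * subvec dx B $ i')"
    using i HBN subvec_carrier[OF sys_carrier(1)] pick_B_less j
    by (auto simp: scalar_prod_def lessThan_atLeast0 submatrix_index_pick[OF H_carrier B_subset N_subset]
        j_def H_entry_sym intro!: sum.cong)
  moreover have "(transpose_mat (submatrix A UNIV N) *\<^sub>v dy) $ i = (transpose_mat A *\<^sub>v dy) $ j"
    using i j AN A_carrier sys_carrier
    by (simp add: scalar_prod_def submatrix_UNIV_index[OF A_carrier N_subset] j_def)
  ultimately show "subvec dz N $ i = ?rhs $ i"
    using i j H_carrier A_carrier HBN AN sys_carrier l_less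
    by (simp add: subvec_eq_vec[OF N_subset] sys_dz_eq j_def)
qed

end

lemma sys_unique:
  assumes sol: "sys n m H A M B N dx dy dz" and sol': "sys n m H A M B N dx' dy' dz'"
    and eq: "dz $ l = dz' $ l"
  shows "dx = dx' \<and> dy = dy' \<and> dz = dz'"
proof -
  have "vec_of_list [dx $ l] @\<^sub>v subvec dx B @\<^sub>v (- dy) = vec_of_list [dx' $ l] @\<^sub>v subvec dx' B @\<^sub>v (- dy')"
    using sys_Kl_mult_vec[OF sol] sys_Kl_mult_vec[OF sol'] eq
    by (intro mult_mat_vec_cancel[OF Kl_carrier Kl_nonsingular sys_Kl_vec_carrier[OF sol] sys_Kl_vec_carrier[OF sol']])
      simp
  then have "dx $ l = dx' $ l" "subvec dx B = subvec dx' B" "- dy = - dy'"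
    using append_vec_eq[OF subvec_carrier[OF sys_carrier(1)[OF sol]] subvec_carrier[OF sys_carrier(1)[OF sol']]]
    by (auto simp: append_vec_eq[of _ 1])
  then have "dx = dx'" and "dy = dy'"
    using sys_embed_vec[OF sol] sys_embed_vec[OF sol'] by (metis, metis uminus_uminus_vec)
  then show ?thesis using sys_dz_eq[OF sol] sys_dz_eq[OF sol'] by simp
qed

lemma sys_KB_kernel:
  assumes sol: "sys n m H A M B N dx dy dz" and pos: "dz $ l > 0"
    and v: "v \<in> carrier_vec (card B + m)" and KB_v: "KB H A M B *\<^sub>v v = 0\<^sub>v (card B + m)"
  shows "\<exists>s. vec_of_list [0] @\<^sub>v v = s \<cdot>\<^sub>v (vec_of_list [dx $ l] @\<^sub>v subvec dx B @\<^sub>v (- dy))"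
proof -
  let ?u = "vec_of_list [dx $ l] @\<^sub>v subvec dx B @\<^sub>v (- dy)"
  define s where "s = (Kl_col H A B l \<bullet> v) / dz $ l"
  have "Kl H A M B l *\<^sub>v (s \<cdot>\<^sub>v ?u) = s \<cdot>\<^sub>v (vec_of_list [dz $ l] @\<^sub>v 0\<^sub>v (card B) @\<^sub>v 0\<^sub>v m)"
    unfolding mult_mat_vec[OF Kl_carrier sys_Kl_vec_carrier[OF sol]] sys_Kl_mult_vec[OF sol] ..
  also have "\<dots> = vec_of_list [Kl_col H A B l \<bullet> v] @\<^sub>v 0\<^sub>v (card B + m)"
    using pos by (intro eq_vecI) (auto simp: s_def less_Suc_eq_0_disj)
  also have "\<dots> = Kl H A M B l *\<^sub>v (vec_of_list [0] @\<^sub>v v)"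
    unfolding Kl_mult_vec_head_zero[OF v] KB_v ..
  finally have eq: "Kl H A M B l *\<^sub>v (s \<cdot>\<^sub>v ?u) = Kl H A M B l *\<^sub>v (vec_of_list [0] @\<^sub>v v)" .
  have "vec_of_list [0] @\<^sub>v v \<in> carrier_vec (1 + (card B + m))"
    using v by (intro append_carrier_vec) (auto intro: carrier_vecI)
  from mult_mat_vec_cancel[OF Kl_carrier Kl_nonsingular this _ eq[symmetric]]
  show ?thesis using sys_Kl_vec_carrier[OF sol] by auto
qed

lemma sys_dx_l_nonneg:
  assumes sol: "sys n m H A M B N dx dy dz" and pos: "dz $ l > 0"
  shows "dx $ l \<ge> 0"
proof -
  have "0 \<le> dx \<bullet> (H *\<^sub>v dx) + dy \<bullet> (M *\<^sub>v dy)"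
    using H_psd M_psd sys_carrier[OF sol] by (simp add: sym_psd_def add_nonneg_nonneg)
  then have "0 \<le> dz $ l * dx $ l" using sys_quadratic_form[OF sol] by simp
  then show ?thesis using pos by (simp add: zero_le_mult_iff)
qed

lemma sys_KB_nonsingular:
  assumes sol: "sys n m H A M B N dx dy dz" and pos: "dz $ l > 0" and dx_l: "dx $ l > 0"
  shows "det (KB H A M B) \<noteq> 0"
proof
  assume "det (KB H A M B) = 0"
  then obtain v where v: "v \<in> carrier_vec (card B + m)" "v \<noteq> 0\<^sub>v (card B + m)"
    and KB_v: "KB H A M B *\<^sub>v v = 0\<^sub>v (card B + m)"
    using det_0_iff_vec_prod_zero_field[OF KB_carrier] by blast
  obtain s where s: "vec_of_list [0] @\<^sub>v v = s \<cdot>\<^sub>v (vec_of_list [dx $ l] @\<^sub>v subvec dx B @\<^sub>v (- dy))"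
    using sys_KB_kernel[OF sol pos v(1) KB_v] by blast
  have "s * dx $ l = 0" using arg_cong[OF s, of "\<lambda>x. x $ 0"] by simp
  then have s0: "s = 0" using dx_l by simp
  have "v = 0\<^sub>v (card B + m)"
  proof (rule eq_vecI)
    fix i assume "i < dim_vec (0\<^sub>v (card B + m) :: real vec)"
    then show "v $ i = 0\<^sub>v (card B + m) $ i"
      using arg_cong[OF s, of "\<lambda>x. x $ Suc i"] s0 v(1)
        subvec_carrier[OF sys_carrier(1)[OF sol]] sys_carrier(2)[OF sol] by simp
  qed (use v(1) in simp)
  then show False using v(2) by simp
qed

lemma sys_degenerate_psd:
  assumes sol: "sys n m H A M B N dx dy dz" and dx_l: "dx $ l = 0"
  shows "H *\<^sub>v dx = 0\<^sub>v n" and "M *\<^sub>v dy = 0\<^sub>v m"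
proof -
  have "dx \<bullet> (H *\<^sub>v dx) \<ge> 0" "dy \<bullet> (M *\<^sub>v dy) \<ge> 0"
    using H_psd M_psd sys_carrier[OF sol] by (auto simp: sym_psd_def)
  then have "dx \<bullet> (H *\<^sub>v dx) = 0" "dy \<bullet> (M *\<^sub>v dy) = 0"
    using sys_quadratic_form[OF sol] dx_l by auto
  then show "H *\<^sub>v dx = 0\<^sub>v n" "M *\<^sub>v dy = 0\<^sub>v m"
    using sym_psd_mult_vec_eq_0 H_psd M_psd sys_carrier[OF sol] by auto
qed

lemma sys_degenerate_subvec_B:
  assumes sol: "sys n m H A M B N dx dy dz" and dx_l: "dx $ l = 0"
  shows "subvec dx B = 0\<^sub>v (card B)"
proof -
  let ?p = "subvec dx B"
  have p: "?p \<in> carrier_vec (card B)" by (rule subvec_carrier[OF sys_carrier(1)[OF sol]])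
  have "embed_vec n B l 0 ?p = dx" using sys_embed_vec[OF sol] dx_l by simp
  moreover have "H *\<^sub>v dx + transpose_mat A *\<^sub>v 0\<^sub>v m = 0\<^sub>v n"
    using sys_degenerate_psd[OF sol dx_l] A_carrier by simp
  moreover have "A *\<^sub>v dx - M *\<^sub>v 0\<^sub>v m = 0\<^sub>v m"
    using sys_A_dx[OF sol] sys_degenerate_psd[OF sol dx_l] M_carrier by simp
  ultimately have "Kl H A M B l *\<^sub>v (vec_of_list [0] @\<^sub>v ?p @\<^sub>v 0\<^sub>v m) = 0\<^sub>v (1 + (card B + m))"
    using Kl_mult_vec[OF p, of "0\<^sub>v m" 0] l_less by (simp add: subvec_zero_vec[OF B_subset] append_zero_vec zero_vec_Suc)
  also have "\<dots> = Kl H A M B l *\<^sub>v 0\<^sub>v (1 + (card B + m))" using Kl_carrier by simp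
  finally have eq: "Kl H A M B l *\<^sub>v (vec_of_list [0] @\<^sub>v ?p @\<^sub>v 0\<^sub>v m) = Kl H A M B l *\<^sub>v 0\<^sub>v (1 + (card B + m))" .
  have "vec_of_list [0] @\<^sub>v ?p @\<^sub>v 0\<^sub>v m \<in> carrier_vec (1 + (card B + m))"
    using p by (intro append_carrier_vec) (auto intro: carrier_vecI)
  from mult_mat_vec_cancel[OF Kl_carrier Kl_nonsingular this _ eq]
  have u0: "vec_of_list [0] @\<^sub>v ?p @\<^sub>v 0\<^sub>v m = 0\<^sub>v (1 + (card B + m))" by simp
  show ?thesis
  proof (rule eq_vecI)
    fix i assume "i < dim_vec (0\<^sub>v (card B) :: real vec)"
    then show "?p $ i = 0\<^sub>v (card B) $ i" using arg_cong[OF u0, of "\<lambda>x. x $ Suc i"] p by simp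
  qed (use p in simp)
qed

lemma sys_degenerate_KB_kernel:
  assumes sol: "sys n m H A M B N dx dy dz" and dx_l: "dx $ l = 0"
  shows "KB H A M B *\<^sub>v (0\<^sub>v (card B) @\<^sub>v dy) = 0\<^sub>v (card B + m)"
proof -
  note dy = sys_carrier(2)[OF sol]
  have w: "0\<^sub>v (card B) @\<^sub>v dy \<in> carrier_vec (card B + m)" using dy by simp
  have "embed_vec n B l 0 (0\<^sub>v (card B)) = dx"
    using sys_embed_vec[OF sol] dx_l sys_degenerate_subvec_B[OF sol dx_l] by simp
  moreover have "H *\<^sub>v dx + transpose_mat A *\<^sub>v dy = - dz"
    using sys_dz_eq[OF sol] sys_degenerate_psd[OF sol dx_l] dy A_carrier by (auto intro!: eq_vecI)
  moreover have "subvec (- dz) B = 0\<^sub>v (card B)"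
    using sol sys_carrier(3)[OF sol] pick_B pick_B_less by (intro eq_vecI) (auto simp: subvec_eq sys_def)
  moreover have "A *\<^sub>v dx - M *\<^sub>v dy = 0\<^sub>v m"
    using sys_A_dx[OF sol] sys_degenerate_psd[OF sol dx_l] M_carrier by simp
  ultimately have "Kl H A M B l *\<^sub>v (vec_of_list [0] @\<^sub>v 0\<^sub>v (card B) @\<^sub>v dy)
      = vec_of_list [(- dz) $ l] @\<^sub>v 0\<^sub>v (card B) @\<^sub>v 0\<^sub>v m"
    using Kl_mult_vec[OF zero_carrier_vec dy, of 0] by simp_all
  then have "vec_of_list [Kl_col H A B l \<bullet> (0\<^sub>v (card B) @\<^sub>v dy)] @\<^sub>v (KB H A M B *\<^sub>v (0\<^sub>v (card B) @\<^sub>v dy))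
      = vec_of_list [(- dz) $ l] @\<^sub>v 0\<^sub>v (card B + m)"
    unfolding Kl_mult_vec_head_zero[OF w] append_zero_vec .
  then show ?thesis by (simp add: append_vec_eq[of _ 1])
qed

lemma sys_KB_dichotomy:
  assumes sol: "sys n m H A M B N dx dy dz" and pos: "dz $ l > 0"
  shows "(det (KB H A M B) \<noteq> 0 \<and> dx $ l > 0) \<or>
    (det (KB H A M B) = 0 \<and> dx $ l = 0 \<and> subvec dx B = 0\<^sub>v (card B) \<and>
     order 0 (char_poly (KB H A M B)) = 1 \<and> eigenvector (KB H A M B) (0\<^sub>v (card B) @\<^sub>v dy) 0)"
proof (cases "dx $ l > 0")
  case True
  then show ?thesis using sys_KB_nonsingular[OF sol pos] by blast
next
  case False
  then have dx_l: "dx $ l = 0" using sys_dx_l_nonneg[OF sol pos] by simp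
  note dy = sys_carrier(2)[OF sol]
  note dx_B = sys_degenerate_subvec_B[OF sol dx_l]
  let ?w = "0\<^sub>v (card B) @\<^sub>v dy"
  have w: "?w \<in> carrier_vec (card B + m)" using dy by simp
  have KB_w: "KB H A M B *\<^sub>v ?w = 0\<^sub>v (card B + m)" by (rule sys_degenerate_KB_kernel[OF sol dx_l])
  have "dy \<noteq> 0\<^sub>v m"
  proof
    assume "dy = 0\<^sub>v m"
    then have "vec_of_list [dx $ l] @\<^sub>v subvec dx B @\<^sub>v (- dy) = 0\<^sub>v (1 + (card B + m))"
      using dx_l dx_B by (simp add: append_zero_vec zero_vec_Suc)
    then have "vec_of_list [dz $ l] @\<^sub>v 0\<^sub>v (card B) @\<^sub>v 0\<^sub>v m = 0\<^sub>v (1 + (card B + m))"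
      using sys_Kl_mult_vec[OF sol] Kl_carrier by simp
    from arg_cong[OF this, of "\<lambda>x. x $ 0"] show False using pos by simp
  qed
  then have w_nonzero: "?w \<noteq> 0\<^sub>v (card B + m)"
    using dy by (auto simp flip: append_zero_vec simp: append_vec_eq[OF zero_carrier_vec zero_carrier_vec])
  have "\<exists>c. v = c \<cdot>\<^sub>v ?w"
    if v: "v \<in> carrier_vec (card B + m)" and KB_v: "KB H A M B *\<^sub>v v = 0\<^sub>v (card B + m)" for v
  proof -
    obtain s where s: "vec_of_list [0] @\<^sub>v v = s \<cdot>\<^sub>v (vec_of_list [dx $ l] @\<^sub>v subvec dx B @\<^sub>v (- dy))"
      using sys_KB_kernel[OF sol pos v KB_v] by blast
    have "v = (- s) \<cdot>\<^sub>v ?w"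
    proof (rule eq_vecI)
      fix i assume "i < dim_vec ((- s) \<cdot>\<^sub>v ?w)"
      then show "v $ i = ((- s) \<cdot>\<^sub>v ?w) $ i"
        using arg_cong[OF s, of "\<lambda>x. x $ Suc i"] v dy dx_B by (cases "i < card B") auto
    qed (use v dy in simp)
    then show ?thesis by blast
  qed
  then have "order 0 (char_poly (KB H A M B)) = 1"
    by (rule simple_zero_eigenvalue_symmetric[OF KB_carrier KB_sym w w_nonzero KB_w])
  moreover have "det (KB H A M B) = 0"
    using det_0_iff_vec_prod_zero_field[OF KB_carrier] w w_nonzero KB_w by blast
  moreover have "eigenvector (KB H A M B) ?w 0"
    using KB_carrier w w_nonzero KB_w dy by (simp add: eigenvector_def)
  ultimately show ?thesis using dx_l dx_B by simp
qed

end

theorem proposition4: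
  fixes n m :: nat and H M A :: "real mat" and l :: nat and B N :: "nat set" and zl :: real
  assumes H: "sym_psd n H" and M: "sym_psd m M" and A: "A \<in> carrier_mat m n"
    and l: "l < n" and BN: "B \<subseteq> {0..<n}" "N \<subseteq> {0..<n}"
    and disj: "l \<notin> B" "l \<notin> N" "B \<inter> N = {}"
    and union: "B \<union> {l} \<union> N = {0..<n}"
    and Kl_nonsing: "det (Kl H A M B l) \<noteq> 0"
    and zl: "zl \<ge> 0"
  shows
   "(zl = 0 \<longrightarrow>
      (\<forall>dx dy dz. sys n m H A M B N dx dy dz \<and> dz $ l = zl \<longrightarrow>
         dx $ l = 0 \<and> subvec dx B = 0\<^sub>v (card B) \<and> dy = 0\<^sub>v m \<and> subvec dz N = 0\<^sub>v (card N)))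
    \<and>
    (zl > 0 \<longrightarrow>
      (\<forall>dx dy dz dx' dy' dz'. sys n m H A M B N dx dy dz \<and> dz $ l = zl \<and>
          sys n m H A M B N dx' dy' dz' \<and> dz' $ l = zl \<longrightarrow>
         dx $ l = dx' $ l \<and> subvec dx B = subvec dx' B \<and> dy = dy' \<and> subvec dz N = subvec dz' N)
      \<and>
      (\<forall>dx dy dz. sys n m H A M B N dx dy dz \<and> dz $ l = zl \<longrightarrow>
         Kl H A M B l *\<^sub>v (vec_of_list [dx $ l] @\<^sub>v subvec dx B @\<^sub>v (- dy))
           = vec_of_list [zl] @\<^sub>v 0\<^sub>v (card B) @\<^sub>v 0\<^sub>v m
         \<and> subvec dz N = (dx $ l) \<cdot>\<^sub>v subvec (col H l) N
              + transpose_mat (submatrix H B N) *\<^sub>v subvec dx B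
              - transpose_mat (submatrix A UNIV N) *\<^sub>v dy
         \<and> ((det (KB H A M B) \<noteq> 0 \<and> dx $ l > 0) \<or>
            (det (KB H A M B) = 0 \<and> dx $ l = 0 \<and> subvec dx B = 0\<^sub>v (card B) \<and>
             order 0 (char_poly (KB H A M B)) = 1 \<and>
             eigenvector (KB H A M B) (0\<^sub>v (card B) @\<^sub>v dy) 0))))"
proof -
  interpret saddle_point_system n B l m H A M N
    using H M A l BN(1) disj(1) union Kl_nonsing by unfold_locales (auto simp: sym_psd_def)
  have zero: "dx $ l = 0 \<and> subvec dx B = 0\<^sub>v (card B) \<and> dy = 0\<^sub>v m \<and> subvec dz N = 0\<^sub>v (card N)"
    if "sys n m H A M B N dx dy dz" and "dz $ l = 0" for dx dy dz
    using sys_unique[OF that(1) sys_zero] that(2) subvec_zero_vec[OF BN(1)] subvec_zero_vec[OF BN(2)] l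
    by simp
  show ?thesis using zero sys_unique sys_Kl_mult_vec sys_dz_N sys_KB_dichotomy by blast
qed

end
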